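(* Let $c_0,\dots,c_{N-1}$ be the vertices of a convex polygonal arc in the plane, let $L_i=\tfrac12(c_{i+1}-c_i)$ for $0\le i\le N-2$, and assume $[L_i,L_j]>0$ whenever $i<j$. For $0\le i\le j\le N-1$ define $$p(i,j)=\frac{c_i+c_j}{2},\qquad f(i,j)=\sum_{i\le k<l\le j-1}[L_k,L_l],\qquad q(i,j)=(p(i,j),f(i,j))\in\mathbb{R}^3.$$ Then $q$ is a discrete indefinite improper affine sphere, that is: (1) for all $1\le i<j\le N-2$ the five points $q(i,j),q(i+1,j),q(i-1,j),q(i,j-1),q(i,j+1)$ are coplanar; and (2) there is a fixed direction $\xi\in\mathbb{R}^3$ such that for all $0\le i<j\le N-2$ the vector $q(i,j)+q(i+1,j+1)-q(i+1,j)-q(i,j+1)$ is parallel to $\xi$.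
   Context: $[X,Y]$ denotes the determinant of the $2\times 2$ matrix with columns $X,Y$. A map $q:\mathbb{Z}^2\to\mathbb{R}^3$ is called a discrete indefinite improper affine sphere if (i) for each $(i,j)$ the points $q(i,j),q(i\pm1,j),q(i,j\pm1)$ are coplanar and (ii) there is a direction $\xi$ such that every $q(i,j)+q(i+1,j+1)-q(i+1,j)-q(i,j+1)$ is parallel to $\xi$. *)

theory Defs
  imports "HOL-Analysis.Analysis"
begin

definition det2 :: "real^2 \<Rightarrow> real^2 \<Rightarrow> real" where
  "det2 X Y = X$1 * Y$2 - X$2 * Y$1"

definition Ledge :: "(nat \<Rightarrow> real^2) \<Rightarrow> nat \<Rightarrow> real^2" where
  "Ledge c i = (1/2) *\<^sub>R (c (Suc i) - c i)"

definition pmid :: "(nat \<Rightarrow> real^2) \<Rightarrow> nat \<Rightarrow> nat \<Rightarrow> real^2" where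
  "pmid c i j = (1/2) *\<^sub>R (c i + c j)"

definition fheight :: "(nat \<Rightarrow> real^2) \<Rightarrow> nat \<Rightarrow> nat \<Rightarrow> real" where
  "fheight c i j = (\<Sum>k\<in>{i..<j}. \<Sum>l\<in>{Suc k..<j}. det2 (Ledge c k) (Ledge c l))"

definition qmap :: "(nat \<Rightarrow> real^2) \<Rightarrow> nat \<Rightarrow> nat \<Rightarrow> real^3" where
  "qmap c i j = vector [pmid c i j $ 1, pmid c i j $ 2, fheight c i j]"

end

theory Submission
  imports Defs
begin

text \<open>
  Writing \<open>h(i,j) = (c\<^sub>j - c\<^sub>i)/2\<close>, moving one index of \<open>f\<close> by one step changes it by
  \<open>[h(i,j), \<Delta>p]\<close>, where \<open>\<Delta>p\<close> is the corresponding change of \<open>p\<close>; this expression is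
  symmetric under exchanging the two endpoints of the step. Hence all four neighbours of
  \<open>q(i,j)\<close> lie on the plane through \<open>q(i,j)\<close> that is the graph of
  \<open>x \<mapsto> f(i,j) + [h(i,j), x - p(i,j)]\<close>. The mixed second difference of \<open>p\<close> vanishes and
  that of \<open>f\<close> equals \<open>-[L\<^sub>i, L\<^sub>j]\<close>, so \<open>\<xi>\<close> can be taken vertical. Neither identity
  needs the positivity hypothesis, which only makes \<open>q\<close> non-degenerate.
\<close>

lemma det2_sum_right: "det2 X (sum f A) = (\<Sum>l\<in>A. det2 X (f l))"
  by (simp add: det2_def sum_subtractf sum_distrib_left)

lemma det2_sum_left: "det2 (sum f A) Y = (\<Sum>l\<in>A. det2 (f l) Y)"
  by (simp add: det2_def sum_subtractf sum_distrib_right)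

definition halfchord :: "(nat \<Rightarrow> real^2) \<Rightarrow> nat \<Rightarrow> nat \<Rightarrow> real^2" where
  "halfchord c i j = (1/2) *\<^sub>R (c j - c i)"

lemma sum_Ledge: "i \<le> j \<Longrightarrow> (\<Sum>l\<in>{i..<j}. Ledge c l) = halfchord c i j"
  unfolding Ledge_def halfchord_def by (simp add: scaleR_sum_right[symmetric] sum_Suc_diff')

lemma fheight_Suc_left:
  assumes "i < j"
  shows "fheight c i j = det2 (Ledge c i) (halfchord c (Suc i) j) + fheight c (Suc i) j"
  using assms by (simp add: fheight_def sum.atLeast_Suc_lessThan det2_sum_right[symmetric] sum_Ledge)

lemma fheight_Suc_right:
  assumes "i \<le> j"
  shows "fheight c i (Suc j) = fheight c i j + det2 (halfchord c i j) (Ledge c j)"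
proof -
  have "fheight c i (Suc j) = (\<Sum>k\<in>{i..<j}.
      (\<Sum>l\<in>{Suc k..<j}. det2 (Ledge c k) (Ledge c l)) + det2 (Ledge c k) (Ledge c j))"
    unfolding fheight_def using assms by (simp add: sum.atLeastLessThan_Suc)
  then show ?thesis
    using assms by (simp add: fheight_def sum.distrib det2_sum_left[symmetric] sum_Ledge)
qed

lemma coplanar_affine_graph: "coplanar {P::real^3. P$3 = a + b * P$1 + d * P$2}"
proof -
  let ?u = "vector [0, 0, a] :: real^3" and ?v = "vector [1, 0, a + b] :: real^3"
    and ?w = "vector [0, 1, a + d] :: real^3"
  have "P \<in> affine hull {?u, ?v, ?w}" if "P$3 = a + b * P$1 + d * P$2" for P
    unfolding affine_hull_3
    by (rule CollectI, rule exI[of _ "1 - P$1 - P$2"], rule exI[of _ "P$1"], rule exI[of _ "P$2"])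
      (use that in \<open>simp add: vec_eq_iff forall_3 vector_3 algebra_simps\<close>)
  then show ?thesis
    unfolding coplanar_def by blast
qed

definition tangent_plane :: "(nat \<Rightarrow> real^2) \<Rightarrow> nat \<Rightarrow> nat \<Rightarrow> (real^3) set" where
  "tangent_plane c i j =
     {P. P$3 = fheight c i j + det2 (halfchord c i j) (vector [P$1, P$2] - pmid c i j)}"

lemma coplanar_tangent_plane: "coplanar (tangent_plane c i j)"
proof -
  let ?h = "halfchord c i j" and ?p = "pmid c i j"
  have "tangent_plane c i j =
      {P. P$3 = (fheight c i j - det2 ?h ?p) + (- ?h$2) * P$1 + ?h$1 * P$2}"
    unfolding tangent_plane_def det2_def by (simp add: vector_2 algebra_simps)
  then show ?thesis
    by (simp only: coplanar_affine_graph)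
qed

lemma qmap_in_tangent_plane_iff:
  "qmap c i' j' \<in> tangent_plane c i j \<longleftrightarrow>
     fheight c i' j' - fheight c i j = det2 (halfchord c i j) (pmid c i' j' - pmid c i j)"
proof -
  have "vector [qmap c i' j' $ 1, qmap c i' j' $ 2] = pmid c i' j'"
    by (simp add: qmap_def vec_eq_iff forall_2 vector_2 vector_3)
  then show ?thesis
    by (auto simp: tangent_plane_def qmap_def vector_3)
qed

lemma qmap_in_own_tangent_plane: "qmap c i j \<in> tangent_plane c i j"
  by (simp add: qmap_in_tangent_plane_iff det2_def)

lemma qmap_Suc_left_in_tangent_plane:
  assumes "i < j"
  shows "qmap c (Suc i) j \<in> tangent_plane c i j"
proof -
  have "pmid c (Suc i) j - pmid c i j = Ledge c i"
    by (simp add: pmid_def Ledge_def algebra_simps)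
  moreover have "halfchord c i j = Ledge c i + halfchord c (Suc i) j"
    by (simp add: halfchord_def Ledge_def algebra_simps)
  ultimately show ?thesis
    using fheight_Suc_left[OF assms, of c]
    by (simp add: qmap_in_tangent_plane_iff det2_def algebra_simps)
qed

lemma qmap_Suc_right_in_tangent_plane:
  assumes "i \<le> j"
  shows "qmap c i (Suc j) \<in> tangent_plane c i j"
proof -
  have "pmid c i (Suc j) - pmid c i j = Ledge c j"
    by (simp add: pmid_def Ledge_def algebra_simps)
  then show ?thesis
    using fheight_Suc_right[OF assms, of c] by (simp add: qmap_in_tangent_plane_iff)
qed

lemma qmap_in_tangent_plane_sym:
  assumes "i = i' \<or> j = j'"
  shows "qmap c i' j' \<in> tangent_plane c i j \<longleftrightarrow> qmap c i j \<in> tangent_plane c i' j'"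
proof -
  let ?d = "pmid c i' j' - pmid c i j"
  obtain s where hs: "halfchord c i j = halfchord c i' j' + s *\<^sub>R ?d"
  proof (cases "i = i'")
    case True
    then show ?thesis
      by (intro that[of "-1"]) (simp add: halfchord_def pmid_def algebra_simps)
  next
    case False
    then show ?thesis
      using assms by (intro that[of 1]) (simp add: halfchord_def pmid_def algebra_simps)
  qed
  then have "det2 (halfchord c i' j') (pmid c i j - pmid c i' j') = - det2 (halfchord c i j) ?d"
    unfolding hs det2_def by (simp add: algebra_simps)
  then show ?thesis
    unfolding qmap_in_tangent_plane_iff by linarith
qed

lemma qmap_cross_difference:
  assumes "i < j"
  shows "qmap c i j + qmap c (Suc i) (Suc j) - qmap c (Suc i) j - qmap c i (Suc j)
           = (- det2 (Ledge c i) (Ledge c j)) *\<^sub>R axis 3 1"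
proof -
  have "halfchord c i j = Ledge c i + halfchord c (Suc i) j"
    by (simp add: halfchord_def Ledge_def algebra_simps)
  then have "fheight c i j + fheight c (Suc i) (Suc j) - fheight c (Suc i) j - fheight c i (Suc j)
      = - det2 (Ledge c i) (Ledge c j)"
    using assms by (simp add: fheight_Suc_right det2_def algebra_simps)
  then show ?thesis
    by (simp add: vec_eq_iff forall_3 qmap_def pmid_def axis_def vector_3 field_simps)
qed

theorem mainTheorem5:
  fixes c :: "nat \<Rightarrow> real^2" and N :: nat
  assumes pos: "\<And>i j. i < j \<Longrightarrow> j \<le> N - 2 \<Longrightarrow> det2 (Ledge c i) (Ledge c j) > 0"
  shows "(\<forall>i j. 1 \<le> i \<and> i < j \<and> j \<le> N - 2 \<longrightarrow>
            coplanar {qmap c i j, qmap c (i+1) j, qmap c (i-1) j, qmap c i (j-1), qmap c i (j+1)})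
       \<and> (\<exists>\<xi>::real^3. \<xi> \<noteq> 0 \<and>
            (\<forall>i j. i < j \<and> j \<le> N - 2 \<longrightarrow>
               (\<exists>t::real. qmap c i j + qmap c (i+1) (j+1) - qmap c (i+1) j - qmap c i (j+1) = t *\<^sub>R \<xi>)))"
proof (intro conjI allI impI)
  fix i j :: nat
  assume "1 \<le> i \<and> i < j \<and> j \<le> N - 2"
  then obtain i' j' where ij: "i = Suc i'" "j = Suc j'" "i' < j" "i \<le> j'"
    by (cases i; cases j) auto
  have "{qmap c i j, qmap c (i+1) j, qmap c (i-1) j, qmap c i (j-1), qmap c i (j+1)}
      \<subseteq> tangent_plane c i j"
    using ij qmap_in_own_tangent_plane[of c i j]
      qmap_Suc_left_in_tangent_plane[of i j c] qmap_Suc_right_in_tangent_plane[of i j c]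
      qmap_Suc_left_in_tangent_plane[of i' j c] qmap_Suc_right_in_tangent_plane[of i j' c]
      qmap_in_tangent_plane_sym[of i' i j j c] qmap_in_tangent_plane_sym[of i i j' j c]
    by simp
  then show "coplanar {qmap c i j, qmap c (i+1) j, qmap c (i-1) j, qmap c i (j-1), qmap c i (j+1)}"
    using coplanar_subset coplanar_tangent_plane by blast
next
  show "\<exists>\<xi>::real^3. \<xi> \<noteq> 0 \<and>
      (\<forall>i j. i < j \<and> j \<le> N - 2 \<longrightarrow>
        (\<exists>t::real. qmap c i j + qmap c (i+1) (j+1) - qmap c (i+1) j - qmap c i (j+1) = t *\<^sub>R \<xi>))"
  proof (intro exI[of _ "axis 3 1"] conjI allI impI)
    fix i j :: nat
    assume "i < j \<and> j \<le> N - 2"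
    then show "\<exists>t. qmap c i j + qmap c (i+1) (j+1) - qmap c (i+1) j - qmap c i (j+1) = t *\<^sub>R axis 3 1"
      using qmap_cross_difference[of i j c] by (intro exI[of _ "- det2 (Ledge c i) (Ledge c j)"]) simp
  qed simp
qed

end
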